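(* Let $w=(w_\sigma)_{\sigma\in\mathscr{I}}$ index an Ekedahl–Oort stratum $M_w$, let $x\in M_w(k)$ be a geometric point, and let $\{\tau,\bar\tau\}\in\mathscr{I}^+$ with $\tau=i\in\mathscr{I}_\mathfrak{P}$, writing $\mathfrak{f}(i)=r_\tau$ and $\mathfrak{f}(i-1)=r_{\phi^{-1}\circ\tau}$. Then $r_V\{\tau,\bar\tau\}(x)=r_V^{\rm ord}\{\tau,\bar\tau\}$ if and only if: (a) in case $\mathfrak{f}(i-1)\le\mathfrak{f}(i)$: $\#\{j:\ j\le d-\mathfrak{f}(i-1),\ w_i(j)\le\mathfrak{f}(i)\}=\mathfrak{f}(i)-\mathfrak{f}(i-1)$; (b) in case $\mathfrak{f}(i)\le\mathfrak{f}(i-1)$: $\#\{j:\ d-\mathfrak{f}(i-1)+1\le j,\ \mathfrak{f}(i)+1\le w_i(j)\}=\mathfrak{f}(i-1)-\mathfrak{f}(i)$. (When $\mathfrak{f}(i-1)=\mathfrak{f}(i)$ both conditions are equivalent.)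
   Context: Notation for unitary Shimura varieties: $K$ CM of degree $2g$, $\mathscr{I}=\mathrm{Hom}(\mathcal{O}_K,\kappa)$ (via a fixed embedding), $\bar\tau=\tau\circ\rho$, $\mathscr{I}^+$ the pairs $\{\tau,\bar\tau\}$, signature $(r_\tau)$ with $r_\tau+r_{\bar\tau}=d$. For a prime $\mathfrak{P}\mid p$ of $K$, $\mathscr{I}_\mathfrak{P}$ are the embeddings factoring through $\mathcal{O}_K/\mathfrak{P}$; Frobenius permutes $\mathscr{I}_\mathfrak{P}$ cyclically, and when $\tau$ is written $i$, $\phi\circ\tau$ is written $i+1$ and $\phi^{-1}\circ\tau$ is written $i-1$; $\mathfrak{f}(i)=r_i$. $M$ is the special fiber over $\kappa$ of the PEL unitary moduli space; $\mathcal{P}_\tau=\underline\omega[\tau]$, $V:\mathcal{P}_\tau\to\Phi^*_M\mathcal{P}_{\phi^{-1}\circ\tau}$ induced by Verschiebung; $r_V\{\tau,\bar\tau\}(x)=\dim\ker(V\otimes V)$ on $(\mathcal{P}_\tau\otimes\mathcal{P}_{\bar\tau})_x$, and $r_V^{\rm ord}\{\tau,\bar\tau\}=\max\{0,r_\tau-r_{\phi^{-1}\circ\tau}\}(d-r_\tau)+r_\tau\max\{0,r_{\phi^{-1}\circ\tau}-r_\tau\}$. An $(e,d-e)$-shuffle is a permutation $\pi$ of $\{1,\dots,d\}$ with $\pi^{-1}(1)<\dots<\pi^{-1}(e)$ and $\pi^{-1}(e+1)<\dots<\pi^{-1}(d)$; $\Pi_{e,d-e}$ is the set of these; $w_0(\nu)=d+1-\nu$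 and $\check\pi=w_0\pi w_0$. By Moonen, EO strata $M_w$ of $M$ correspond bijectively to tuples $w=(w_\sigma)_{\sigma\in\mathscr{I}}$ with $w_\sigma\in\Pi_{r_\sigma,d-r_\sigma}$ and $w_{\bar\sigma}=\check w_\sigma$, such that for geometric $x\in M_w(k)$ the Dieudonné module of $A_x[p]$ is isomorphic (with $\mathcal{O}_K$-action) to $N_w=\bigoplus_{i\in\mathscr{I}}\bigoplus_{j=1}^dke_{i,j}$ ($\mathcal{O}_K$ acting on the $i$-summand via $i$) with $F(e_{i,j})=0$ if $w_i(j)\le\mathfrak{f}(i)$, $F(e_{i,j})=e_{i+1,m}$ if $w_i(j)=\mathfrak{f}(i)+m$; $V(e_{i+1,j})=0$ if $j\le d-\mathfrak{f}(i)$, $V(e_{i+1,j})=e_{i,n}$ if $j=d-\mathfrak{f}(i)+w_i(n)$ ($F$ $\phi$-semilinear, $V$ $\phi^{-1}$-semilinear); and $\dim M_w=\sum_{\{\sigma,\bar\sigma\}\in\mathscr{I}^+}\ell(w_\sigma)$, $\ell$ the length in $\mathfrak{S}_d$. The fiber $\mathcal{P}_{\tau,x}$ is identified with the $\tau$-part of $N_w[F]$. *)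

theory Defs
  imports Main "HOL-Library.Function_Algebras" "HOL-Combinatorics.Permutations" "HOL-Computational_Algebra.Polynomial"
begin

(* Basis indices of the Dieudonne module N_w: pairs (embedding, j) with 1 <= j <= d. *)

(* w_0(nu) = d+1-nu and check pi = w_0 pi w_0 (identity outside {1..d}). *)
definition check_perm :: "nat \<Rightarrow> (nat \<Rightarrow> nat) \<Rightarrow> nat \<Rightarrow> nat" where
  "check_perm d \<pi> \<nu> = (if \<nu> \<in> {1..d} then d + 1 - \<pi> (d + 1 - \<nu>) else \<nu>)"

definition shuffles :: "nat \<Rightarrow> nat \<Rightarrow> (nat \<Rightarrow> nat) set" where
  "shuffles e d = {\<pi>. \<pi> permutes {1..d} \<and>
     (\<forall>a b. 1 \<le> a \<and> a < b \<and> b \<le> e \<longrightarrow> inv \<pi> a < inv \<pi> b) \<and>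
     (\<forall>a b. e + 1 \<le> a \<and> a < b \<and> b \<le> d \<longrightarrow> inv \<pi> a < inv \<pi> b)}"

definition F_basis :: "('e \<Rightarrow> 'e) \<Rightarrow> ('e \<Rightarrow> nat) \<Rightarrow> ('e \<Rightarrow> nat \<Rightarrow> nat)
    \<Rightarrow> 'e \<times> nat \<Rightarrow> ('e \<times> nat) option" where
  "F_basis fr f w a = (let t = fst a; j = snd a in
     if w t j \<le> f t then None else Some (fr t, w t j - f t))"

definition V_basis :: "nat \<Rightarrow> ('e \<Rightarrow> 'e) \<Rightarrow> ('e \<Rightarrow> nat) \<Rightarrow> ('e \<Rightarrow> nat \<Rightarrow> nat)
    \<Rightarrow> 'e \<times> nat \<Rightarrow> ('e \<times> nat) option" where
  "V_basis d fr f w a = (let s = inv fr (fst a); j = snd a in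
     if j \<le> d - f s then None
     else Some (s, THE n. n \<in> {1..d} \<and> j = d - f s + w s n))"

(* Vectors of N_w are functions on the basis indices supported on UNIV x {1..d}.
   Semilinear extension of a partial map on basis indices, w.r.t. sigma. *)
definition semilin_ext :: "('k \<Rightarrow> 'k) \<Rightarrow> ('e \<times> nat) set \<Rightarrow> ('e \<times> nat \<Rightarrow> ('e \<times> nat) option)
    \<Rightarrow> ('e \<times> nat \<Rightarrow> 'k::field) \<Rightarrow> ('e \<times> nat \<Rightarrow> 'k)" where
  "semilin_ext \<sigma> B g v = (\<lambda>b. \<Sum>a\<in>{a\<in>B. g a = Some b}. \<sigma> (v a))"

definition basis_idx :: "nat \<Rightarrow> ('e::finite \<times> nat) set" where
  "basis_idx d = UNIV \<times> {1..d}"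

definition frob :: "nat \<Rightarrow> 'k::field \<Rightarrow> 'k" where "frob p x = x ^ p"
definition frob_inv :: "nat \<Rightarrow> 'k::field \<Rightarrow> 'k" where "frob_inv p = inv (frob p)"

definition F_map where
  "F_map p d fr f w = semilin_ext (frob p) (basis_idx d) (F_basis fr f w)"
definition V_map where
  "V_map p d fr f w = semilin_ext (frob_inv p) (basis_idx d) (V_basis d fr f w)"

definition P_space :: "nat \<Rightarrow> nat \<Rightarrow> ('e::finite \<Rightarrow> 'e) \<Rightarrow> ('e \<Rightarrow> nat) \<Rightarrow> ('e \<Rightarrow> nat \<Rightarrow> nat)
    \<Rightarrow> 'e \<Rightarrow> ('e \<times> nat \<Rightarrow> 'k::field) set" where
  "P_space p d fr f w \<tau> = {v. (\<forall>a. a \<notin> {\<tau>} \<times> {1..d} \<longrightarrow> v a = 0) \<and> F_map p d fr f w v = (\<lambda>_. 0)}"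

definition cscale :: "'k::field \<Rightarrow> ('b \<Rightarrow> 'k) \<Rightarrow> ('b \<Rightarrow> 'k)" where
  "cscale c v = (\<lambda>x. c * v x)"

definition tens :: "('b \<Rightarrow> 'k::field) \<Rightarrow> ('b \<Rightarrow> 'k) \<Rightarrow> ('b \<times> 'b \<Rightarrow> 'k)" where
  "tens u v = (\<lambda>(a, b). u a * v b)"

definition P_tensor where
  "P_tensor p d fr f w \<tau> \<tau>' =
     module.span cscale {tens u v | u v. u \<in> P_space p d fr f w \<tau> \<and> v \<in> P_space p d fr f w \<tau>'}"

definition VV_map :: "nat \<Rightarrow> nat \<Rightarrow> ('e::finite \<Rightarrow> 'e) \<Rightarrow> ('e \<Rightarrow> nat) \<Rightarrow> ('e \<Rightarrow> nat \<Rightarrow> nat)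
    \<Rightarrow> (('e \<times> nat) \<times> ('e \<times> nat) \<Rightarrow> 'k::field) \<Rightarrow> (('e \<times> nat) \<times> ('e \<times> nat) \<Rightarrow> 'k)" where
  "VV_map p d fr f w t = (\<lambda>(b1, b2). \<Sum>(a1, a2)\<in>{(a1, a2). a1 \<in> basis_idx d \<and> a2 \<in> basis_idx d \<and>
        V_basis d fr f w a1 = Some b1 \<and> V_basis d fr f w a2 = Some b2}. frob_inv p (t (a1, a2)))"

definition r_V :: "'k::field itself \<Rightarrow> nat \<Rightarrow> nat \<Rightarrow> ('e::finite \<Rightarrow> 'e) \<Rightarrow> ('e \<Rightarrow> nat)
    \<Rightarrow> ('e \<Rightarrow> nat \<Rightarrow> nat) \<Rightarrow> 'e \<Rightarrow> 'e \<Rightarrow> nat" where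
  "r_V _ p d fr f w \<tau> \<tau>' =
     vector_space.dim (cscale :: 'k \<Rightarrow> _)
       {t \<in> P_tensor p d fr f w \<tau> \<tau>'. VV_map p d fr f w t = (\<lambda>_. 0)}"

definition r_V_ord :: "nat \<Rightarrow> nat \<Rightarrow> nat \<Rightarrow> int" where
  "r_V_ord d r r' = max 0 (int r - int r') * (int d - int r) + int r * max 0 (int r' - int r)"

end

theory Submission
  imports Defs
begin

text \<open>
  Let \<open>r = f(i)\<close> and \<open>r' = f(i - 1)\<close>. The \<open>\<tau>\<close>-part of \<open>N\<^sub>w[F]\<close> is spanned by the
  \<open>e\<^sub>i\<^sub>,\<^sub>j\<close> with \<open>w\<^sub>i(j) \<le> r\<close>, so \<open>P\<^sub>\<tau> \<otimes> P\<^sub>\<tau>\<^sub>'\<close> has a basis of tensors of basis vectors.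
  V maps the basis vectors it does not kill injectively to basis vectors, hence the kernel of
  \<open>V \<otimes> V\<close> is spanned by the basis tensors with a factor in \<open>ker V\<close>, and
  \<open>r\<^sub>V = r(d - r) - A B\<close> with \<open>A = #{j > d - r' : w\<^sub>i(j) \<le> r}\<close> and, after the reflection
  \<open>j \<mapsto> d + 1 - j\<close> turning \<open>w\<^sub>\<tau>\<^sub>'\<close> into \<open>w\<^sub>i\<close>, \<open>B = #{j \<le> d - r' : w\<^sub>i(j) > r}\<close>.
  A and B are cells of the 2\<times>2 table that the permutation \<open>w\<^sub>i\<close> induces between the
  conditions \<open>j \<le> d - r'\<close> and \<open>w\<^sub>i(j) \<le> r\<close>; its margins are \<open>d - r', r'\<close> and \<open>r, d - r\<close>.
  If \<open>r' \<le> r\<close> they give \<open>A = r' - c\<close> and \<open>B = d - r - c\<close> for the cell c counted in (b), while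
  \<open>r(d - r) - r\<^sub>V\<^sup>o\<^sup>r\<^sup>d = r'(d - r)\<close>; so equality holds iff \<open>c = 0\<close>, which is (a).
  The case \<open>r \<le> r'\<close> is symmetric.
\<close>

section \<open>Coordinate vector spaces\<close>

lemma sum_fun_apply: "(sum g A) y = (\<Sum>a\<in>A. g a y)" for g :: "'a \<Rightarrow> 'b \<Rightarrow> 'c::comm_monoid_add"
  by (induct A rule: infinite_finite_induct) auto

lemma vector_space_cscale: "vector_space (cscale :: 'k::field \<Rightarrow> ('b \<Rightarrow> 'k) \<Rightarrow> ('b \<Rightarrow> 'k))"
  by unfold_locales (auto simp: cscale_def algebra_simps)

definition unit_vec :: "'b \<Rightarrow> 'b \<Rightarrow> 'k::field" where
  "unit_vec x = (\<lambda>y. if y = x then 1 else 0)"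

definition vanish_off :: "'b set \<Rightarrow> ('b \<Rightarrow> 'k::field) set" where
  "vanish_off X = {v. \<forall>x. x \<notin> X \<longrightarrow> v x = 0}"

lemma inj_unit_vec: "inj (unit_vec :: 'b \<Rightarrow> 'b \<Rightarrow> 'k::field)"
  by (rule injI) (metis unit_vec_def one_neq_zero)

lemma unit_vec_in_vanish_off: "x \<in> X \<Longrightarrow> unit_vec x \<in> vanish_off X"
  by (simp add: vanish_off_def unit_vec_def)

lemma subspace_vanish_off:
  "module.subspace (cscale :: 'k::field \<Rightarrow> ('b \<Rightarrow> 'k) \<Rightarrow> ('b \<Rightarrow> 'k)) (vanish_off X)"
proof -
  interpret vector_space "cscale :: 'k \<Rightarrow> ('b \<Rightarrow> 'k) \<Rightarrow> ('b \<Rightarrow> 'k)" by (rule vector_space_cscale)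
  show ?thesis unfolding subspace_def by (auto simp: vanish_off_def cscale_def)
qed

lemma vanish_off_eq_sum_unit_vec:
  assumes "finite X" "v \<in> vanish_off X"
  shows "v = (\<Sum>x\<in>X. cscale (v x) (unit_vec x))"
proof
  fix y
  have "(\<Sum>x\<in>X. cscale (v x) (unit_vec x)) y = (\<Sum>x\<in>X. if x = y then v y else 0)"
    unfolding sum_fun_apply cscale_def unit_vec_def by (intro sum.cong) auto
  also have "\<dots> = v y" using assms by (auto simp: vanish_off_def)
  finally show "v y = (\<Sum>x\<in>X. cscale (v x) (unit_vec x)) y" by simp
qed

lemma span_unit_vec:
  assumes "finite X"
  shows "module.span (cscale :: 'k::field \<Rightarrow> ('b \<Rightarrow> 'k) \<Rightarrow> ('b \<Rightarrow> 'k)) (unit_vec ` X) = vanish_off X"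
proof -
  interpret vector_space "cscale :: 'k \<Rightarrow> ('b \<Rightarrow> 'k) \<Rightarrow> ('b \<Rightarrow> 'k)" by (rule vector_space_cscale)
  show ?thesis
  proof
    show "span (unit_vec ` X) \<subseteq> vanish_off X"
      by (rule span_minimal[OF _ subspace_vanish_off]) (auto intro: unit_vec_in_vanish_off)
    show "vanish_off X \<subseteq> span (unit_vec ` X)"
    proof
      fix v :: "'b \<Rightarrow> 'k" assume "v \<in> vanish_off X"
      then have "v = (\<Sum>x\<in>X. cscale (v x) (unit_vec x))"
        by (rule vanish_off_eq_sum_unit_vec[OF assms])
      also have "\<dots> \<in> span (unit_vec ` X)"
        by (intro span_sum span_scale span_base) auto
      finally show "v \<in> span (unit_vec ` X)" .
    qed
  qed
qed

lemma independent_unit_vec: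
  assumes "finite X"
  shows "\<not> module.dependent (cscale :: 'k::field \<Rightarrow> ('b \<Rightarrow> 'k) \<Rightarrow> ('b \<Rightarrow> 'k)) (unit_vec ` X)"
proof -
  interpret vector_space "cscale :: 'k \<Rightarrow> ('b \<Rightarrow> 'k) \<Rightarrow> ('b \<Rightarrow> 'k)" by (rule vector_space_cscale)
  show ?thesis
  proof
    assume "dependent (unit_vec ` X)"
    then obtain u where u: "\<exists>v\<in>unit_vec ` X. u v \<noteq> (0::'k)" "(\<Sum>v\<in>unit_vec ` X. cscale (u v) v) = 0"
      using dependent_finite[of "unit_vec ` X"] assms by auto
    then obtain x where x: "x \<in> X" "u (unit_vec x) \<noteq> 0" by auto
    have "0 = (\<Sum>v\<in>unit_vec ` X. cscale (u v) v) x" using u by simp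
    also have "\<dots> = (\<Sum>y\<in>X. cscale (u (unit_vec y)) (unit_vec y) x)"
      unfolding sum_fun_apply by (subst sum.reindex) (auto intro: inj_on_subset[OF inj_unit_vec])
    also have "\<dots> = (\<Sum>y\<in>X. if y = x then u (unit_vec x) else 0)"
      by (intro sum.cong) (auto simp: cscale_def unit_vec_def)
    also have "\<dots> = u (unit_vec x)" using x assms by simp
    finally show False using x by simp
  qed
qed

lemma dim_vanish_off:
  assumes "finite X"
  shows "vector_space.dim (cscale :: 'k::field \<Rightarrow> ('b \<Rightarrow> 'k) \<Rightarrow> ('b \<Rightarrow> 'k)) (vanish_off X) = card X"
proof -
  interpret vector_space "cscale :: 'k \<Rightarrow> ('b \<Rightarrow> 'k) \<Rightarrow> ('b \<Rightarrow> 'k)" by (rule vector_space_cscale)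
  have "dim (vanish_off X :: ('b \<Rightarrow> 'k) set) = card (unit_vec ` X :: ('b \<Rightarrow> 'k) set)"
    using dim_span_eq_card_independent[OF independent_unit_vec[OF assms]]
    by (simp only: span_unit_vec[OF assms])
  also have "\<dots> = card X" by (rule card_image) (rule inj_on_subset[OF inj_unit_vec], simp)
  finally show ?thesis .
qed

lemma span_tens_vanish_off:
  assumes "finite X" "finite Y"
  shows "module.span cscale {tens u v | u v. u \<in> vanish_off X \<and> v \<in> vanish_off Y}
    = (vanish_off (X \<times> Y) :: ('b \<times> 'b \<Rightarrow> 'k::field) set)"
    (is "module.span cscale ?G = _")
proof -
  interpret vector_space "cscale :: 'k \<Rightarrow> ('b \<times> 'b \<Rightarrow> 'k) \<Rightarrow> ('b \<times> 'b \<Rightarrow> 'k)"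
    by (rule vector_space_cscale)
  show ?thesis
  proof
    show "span ?G \<subseteq> vanish_off (X \<times> Y)"
      by (rule span_minimal[OF _ subspace_vanish_off]) (auto simp: vanish_off_def tens_def)
    have "unit_vec ` (X \<times> Y) \<subseteq> ?G"
    proof
      fix z :: "'b \<times> 'b \<Rightarrow> 'k" assume "z \<in> unit_vec ` (X \<times> Y)"
      then obtain x y where "x \<in> X" "y \<in> Y" "z = unit_vec (x, y)" by auto
      moreover have "unit_vec (x, y) = tens (unit_vec x) (unit_vec y :: 'b \<Rightarrow> 'k)"
        by (auto simp: tens_def unit_vec_def)
      ultimately show "z \<in> ?G" by (blast intro: unit_vec_in_vanish_off)
    qed
    then have "span (unit_vec ` (X \<times> Y)) \<subseteq> span ?G" by (rule span_mono)
    then show "vanish_off (X \<times> Y) \<subseteq> span ?G"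
      using span_unit_vec[of "X \<times> Y", where 'k = 'k] assms by simp
  qed
qed

section \<open>Counting with permutations\<close>

lemma card_filter_conj_add:
  "finite X \<Longrightarrow> card {x\<in>X. P x \<and> Q x} + card {x\<in>X. P x \<and> \<not> Q x} = card {x\<in>X. P x}"
  by (subst card_Un_disjoint[symmetric]) (auto intro: arg_cong[where f = card])

lemma card_permutes_filter:
  assumes "W permutes {1..d}"
  shows "card {j\<in>{1..d}. P (W j)} = card {m\<in>{1..(d::nat)}. P m}"
proof -
  have "{j\<in>{1..d}. P (W j)} = W -` {m\<in>{1..d}. P m}"
    using permutes_in_image[OF assms] by blast
  also have "card \<dots> = card {m\<in>{1..d}. P m}"
    using permutes_bij[OF assms] by (intro card_vimage_inj) (auto simp: bij_def)
  finally show ?thesis .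
qed

lemma card_check_perm_filter:
  "card {j\<in>{1..d}. P (check_perm d W j) j} = card {k\<in>{1..(d::nat)}. P (d + 1 - W k) (d + 1 - k)}"
proof -
  have "bij_betw (\<lambda>k. d + 1 - k) {k\<in>{1..d}. P (d + 1 - W k) (d + 1 - k)} {j\<in>{1..d}. P (check_perm d W j) j}"
    by (rule bij_betw_byWitness[where f' = "\<lambda>j. d + 1 - j"]) (auto simp: check_perm_def)
  then show ?thesis by (simp add: bij_betw_same_card)
qed

lemma card_permutes_cells:
  fixes W :: "nat \<Rightarrow> nat"
  assumes "W permutes {1..d}" "r \<le> d" "k \<le> d"
  shows "card {j\<in>{1..d}. j \<le> k \<and> W j \<le> r} + card {j\<in>{1..d}. W j \<le> r \<and> k < j} = r"
    and "card {j\<in>{1..d}. j \<le> k \<and> W j \<le> r} + card {j\<in>{1..d}. j \<le> k \<and> r < W j} = k"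
    and "card {j\<in>{1..d}. W j \<le> r \<and> k < j} + card {j\<in>{1..d}. k < j \<and> r < W j} = d - k"
proof -
  have "card {j\<in>{1..d}. W j \<le> r \<and> j \<le> k} + card {j\<in>{1..d}. W j \<le> r \<and> \<not> j \<le> k}
      = card {j\<in>{1..d}. W j \<le> r}" by (rule card_filter_conj_add) simp
  also have "\<dots> = card {m\<in>{1..d}. m \<le> r}" by (rule card_permutes_filter[OF assms(1)])
  also have "{m\<in>{1..d}. m \<le> r} = {1..r}" using assms(2) by auto
  finally show "card {j\<in>{1..d}. j \<le> k \<and> W j \<le> r} + card {j\<in>{1..d}. W j \<le> r \<and> k < j} = r"
    by (simp add: conj_commute not_le)
  have "card {j\<in>{1..d}. j \<le> k \<and> W j \<le> r} + card {j\<in>{1..d}. j \<le> k \<and> \<not> W j \<le> r}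
      = card {j\<in>{1..d}. j \<le> k}" by (rule card_filter_conj_add) simp
  also have "{j\<in>{1..d}. j \<le> k} = {1..k}" using assms(3) by auto
  finally show "card {j\<in>{1..d}. j \<le> k \<and> W j \<le> r} + card {j\<in>{1..d}. j \<le> k \<and> r < W j} = k"
    by (simp add: not_le)
  have "card {j\<in>{1..d}. k < j \<and> W j \<le> r} + card {j\<in>{1..d}. k < j \<and> \<not> W j \<le> r}
      = card {j\<in>{1..d}. k < j}" by (rule card_filter_conj_add) simp
  also have "{j\<in>{1..d}. k < j} = {k + 1..d}" by auto
  finally show "card {j\<in>{1..d}. W j \<le> r \<and> k < j} + card {j\<in>{1..d}. k < j \<and> r < W j} = d - k"
    by (simp add: not_le conj_commute)
qed

lemma card_check_perm_cell:
  assumes "W permutes {1..d}" "r \<le> d" "r' \<le> d"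
  shows "card {j\<in>{1..d}. check_perm d W j \<le> d - r \<and> r' < j} = card {j\<in>{1..d}. j \<le> d - r' \<and> r < W j}"
proof -
  have "card {j\<in>{1..d}. check_perm d W j \<le> d - r \<and> r' < j}
      = card {j\<in>{1..d}. d + 1 - W j \<le> d - r \<and> r' < d + 1 - j}"
    by (rule card_check_perm_filter[where P = "\<lambda>x j. x \<le> d - r \<and> r' < j"])
  also have "\<dots> = card {j\<in>{1..d}. j \<le> d - r' \<and> r < W j}"
  proof (rule arg_cong[where f = card], rule Collect_cong)
    fix j
    show "j \<in> {1..d} \<and> d + 1 - W j \<le> d - r \<and> r' < d + 1 - j \<longleftrightarrow> j \<in> {1..d} \<and> j \<le> d - r' \<and> r < W j"
    proof (cases "j \<in> {1..d}")
      case True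
      moreover have "W j \<in> {1..d}" using permutes_in_image[OF assms(1)] True by blast
      ultimately show ?thesis using assms(2,3) by (simp only: atLeastAtMost_iff) arith
    qed auto
  qed
  finally show ?thesis .
qed

lemma card_Times_Diff_Times:
  assumes "finite A" "finite B"
  shows "card (A \<times> B - C \<times> C) = card A * card B - card (A \<inter> C) * card (B \<inter> C)"
proof -
  have "A \<times> B \<inter> C \<times> C = (A \<inter> C) \<times> (B \<inter> C)" by auto
  then show ?thesis using assms by (simp add: card_Diff_subset_Int card_cartesian_product)
qed

section \<open>F and V on the basis of \<open>N\<^sub>w\<close>\<close>

lemma frob_eq_0_iff: "0 < p \<Longrightarrow> frob p (x::'k::field) = 0 \<longleftrightarrow> x = 0"
  by (simp add: frob_def)

lemma surj_frob:
  assumes "0 < p" and alg_closed: "\<forall>q::'k::field poly. degree q > 0 \<longrightarrow> (\<exists>x. poly q x = 0)"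
  shows "surj (frob p :: 'k \<Rightarrow> 'k)"
proof -
  have "x \<in> range (frob p)" for x :: 'k
  proof -
    have "degree (monom 1 p + [:-x:]) = p"
      using assms by (subst degree_add_eq_left) (auto simp: degree_monom_eq)
    then obtain y where "poly (monom 1 p + [:-x:]) y = 0" using alg_closed assms by metis
    then have "frob p y = x" by (simp add: poly_monom frob_def)
    then show ?thesis by blast
  qed
  then show ?thesis by blast
qed

lemma frob_inv_eq_0_iff:
  assumes "0 < p" "surj (frob p :: 'k::field \<Rightarrow> 'k)"
  shows "frob_inv p (x::'k) = 0 \<longleftrightarrow> x = 0"
proof -
  have "frob p (frob_inv p y) = y" for y :: 'k
    using assms(2) by (simp add: frob_inv_def surj_f_inv_f)
  from this[of x] this[of 0] show ?thesis using frob_eq_0_iff[OF assms(1)] by metis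
qed

definition F_ker_idx :: "nat \<Rightarrow> ('e \<Rightarrow> nat) \<Rightarrow> ('e \<Rightarrow> nat \<Rightarrow> nat) \<Rightarrow> 'e \<Rightarrow> ('e \<times> nat) set" where
  "F_ker_idx d f w t = {t} \<times> {j \<in> {1..d}. w t j \<le> f t}"

lemma finite_F_ker_idx: "finite (F_ker_idx d f w t)"
  by (simp add: F_ker_idx_def)

lemma F_ker_idx_subset_basis_idx: "F_ker_idx d f w t \<subseteq> basis_idx d"
  by (auto simp: F_ker_idx_def basis_idx_def)

lemma card_F_ker_idx:
  assumes "w t permutes {1..d}" "f t \<le> d"
  shows "card (F_ker_idx d f w t) = f t"
proof -
  have "card (F_ker_idx d f w t) = card {m \<in> {1..d}. m \<le> f t}"
    unfolding F_ker_idx_def card_cartesian_product_singleton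
    by (rule card_permutes_filter[OF assms(1)])
  also have "{m \<in> {1..d}. m \<le> f t} = {1..f t}" using assms(2) by auto
  finally show ?thesis by simp
qed

lemma F_map_at_image:
  assumes "0 < p" and perm: "w t permutes {1..d}" and supp: "v \<in> vanish_off ({t} \<times> {1..d})"
    and j: "j \<in> {1..d}" "f t < w t j"
  shows "F_map p d fr f w v (fr t, w t j - f t) = frob p (v (t, j))"
proof -
  define S where "S = {a \<in> basis_idx d. F_basis fr f w a = Some (fr t, w t j - f t)}"
  have "S \<inter> {t} \<times> {1..d} = {(t, j)}"
  proof (intro set_eqI iffI)
    fix a assume "a \<in> S \<inter> {t} \<times> {1..d}"
    then obtain j' where a: "a = (t, j')" "f t < w t j'" "w t j' - f t = w t j - f t"
      by (auto simp: S_def F_basis_def split: if_splits)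
    then have "w t j' = w t j" using j by linarith
    with permutes_inj[OF perm] have "j' = j" by (rule injD)
    then show "a \<in> {(t, j)}" using a by simp
  qed (use j in \<open>auto simp: S_def basis_idx_def F_basis_def\<close>)
  moreover have "(\<Sum>a\<in>S. frob p (v a)) = (\<Sum>a\<in>S \<inter> {t} \<times> {1..d}. frob p (v a))"
    using supp assms(1)
    by (intro sum.mono_neutral_right) (auto simp: S_def basis_idx_def vanish_off_def frob_def)
  ultimately show ?thesis by (simp add: F_map_def semilin_ext_def S_def)
qed

lemma P_space_eq_vanish_off:
  fixes w :: "'e::finite \<Rightarrow> nat \<Rightarrow> nat"
  assumes "0 < p" and perm: "w t permutes {1..d}"
  shows "(P_space p d fr f w t :: ('e \<times> nat \<Rightarrow> 'k::field) set) = vanish_off (F_ker_idx d f w t)"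
proof (intro set_eqI iffI)
  fix v :: "'e \<times> nat \<Rightarrow> 'k"
  assume v: "v \<in> vanish_off (F_ker_idx d f w t)"
  have "frob p (v a) = 0" if "F_basis fr f w a \<noteq> None" for a
  proof -
    have "a \<notin> F_ker_idx d f w t" using that by (cases a) (auto simp: F_ker_idx_def F_basis_def)
    then have "v a = 0" using v unfolding vanish_off_def by blast
    then show ?thesis using assms(1) by (simp add: frob_def)
  qed
  then have "F_map p d fr f w v = (\<lambda>_. 0)"
    by (auto simp: F_map_def semilin_ext_def intro!: sum.neutral)
  then show "v \<in> P_space p d fr f w t"
    using v by (auto simp: P_space_def vanish_off_def F_ker_idx_def)
next
  fix v :: "'e \<times> nat \<Rightarrow> 'k"
  assume "v \<in> P_space p d fr f w t"
  then have supp: "v \<in> vanish_off ({t} \<times> {1..d})" and F0: "F_map p d fr f w v = (\<lambda>_. 0)"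
    by (auto simp: P_space_def vanish_off_def)
  have high: "v (t, j) = 0" if "j \<in> {1..d}" "f t < w t j" for j
  proof -
    have "frob p (v (t, j)) = 0"
      using F_map_at_image[where w = w and t = t and f = f and d = d and fr = fr, OF assms(1) perm supp that] F0
      by simp
    then show ?thesis using assms(1) by (simp add: frob_def)
  qed
  show "v \<in> vanish_off (F_ker_idx d f w t)"
    unfolding vanish_off_def
  proof (intro CollectI allI impI)
    fix a assume a: "a \<notin> F_ker_idx d f w t"
    show "v a = 0"
    proof (cases "a \<in> {t} \<times> {1..d}")
      case True
      then obtain j where "a = (t, j)" "j \<in> {1..d}" by blast
      with a high show ?thesis by (simp add: F_ker_idx_def not_le)
    next
      case False
      with supp show ?thesis unfolding vanish_off_def by blast
    qed
  qed
qed

lemma P_tensor_eq_vanish_off: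
  fixes w :: "'e::finite \<Rightarrow> nat \<Rightarrow> nat"
  assumes "0 < p" "w t permutes {1..d}" "w t' permutes {1..d}"
  shows "(P_tensor p d fr f w t t' :: (('e \<times> nat) \<times> ('e \<times> nat) \<Rightarrow> 'k::field) set)
     = vanish_off (F_ker_idx d f w t \<times> F_ker_idx d f w t')"
  unfolding P_tensor_def P_space_eq_vanish_off[where w = w and t = t, OF assms(1,2)]
    P_space_eq_vanish_off[where w = w and t = t', OF assms(1,3)]
  by (rule span_tens_vanish_off) (rule finite_F_ker_idx)+

lemma V_basis_eq_SomeD:
  assumes fr: "bij fr" and perm: "\<forall>t. w t permutes {1..d}" and fd: "\<forall>t. f t \<le> d"
    and V: "V_basis d fr f w (t, j) = Some b" and "j \<le> d"
  shows "t = fr (fst b) \<and> j = d - f (fst b) + w (fst b) (snd b)"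
proof -
  define s where "s = inv fr t"
  have j: "d - f s < j" and b: "b = (s, THE n. n \<in> {1..d} \<and> j = d - f s + w s n)"
    using V by (auto simp: V_basis_def s_def Let_def split: if_splits)
  have "\<exists>!n. n \<in> {1..d} \<and> j = d - f s + w s n"
  proof -
    have "j - (d - f s) \<in> {1..d}" using j fd[rule_format, of s] \<open>j \<le> d\<close> by auto
    then obtain n where n: "n \<in> {1..d}" "w s n = j - (d - f s)"
      using permutes_image[OF perm[rule_format, of s]] by (metis imageE)
    show ?thesis
    proof (rule ex1I[of _ n])
      show "n \<in> {1..d} \<and> j = d - f s + w s n" using n j by auto
      fix m assume "m \<in> {1..d} \<and> j = d - f s + w s m"
      then have "w s m = w s n" using n by auto
      with permutes_inj[OF perm[rule_format, of s]] show "m = n" by (rule injD)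
    qed
  qed
  moreover have "t = fr s" unfolding s_def using fr by (simp add: bij_is_surj surj_f_inv_f)
  ultimately show ?thesis using b theI'[of "\<lambda>n. n \<in> {1..d} \<and> j = d - f s + w s n"] by simp
qed

lemma V_basis_inj:
  assumes "bij fr" "\<forall>t. w t permutes {1..d}" "\<forall>t. f t \<le> d"
    and "a \<in> basis_idx d" "a' \<in> basis_idx d"
    and "V_basis d fr f w a = Some b" "V_basis d fr f w a' = Some b"
  shows "a = a'"
proof -
  obtain t j t' j' where "a = (t, j)" "a' = (t', j')" "j \<le> d" "j' \<le> d"
    using assms(4,5) by (auto simp: basis_idx_def)
  with V_basis_eq_SomeD[OF assms(1-3)] assms(6,7) show ?thesis by metis
qed

definition V_dom :: "nat \<Rightarrow> ('e \<Rightarrow> 'e) \<Rightarrow> ('e \<Rightarrow> nat) \<Rightarrow> ('e \<Rightarrow> nat \<Rightarrow> nat) \<Rightarrow> ('e \<times> nat) set" where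
  "V_dom d fr f w = {a. V_basis d fr f w a \<noteq> None}"

lemma F_ker_idx_Int_V_dom:
  "F_ker_idx d f w t \<inter> V_dom d fr f w = {t} \<times> {j \<in> {1..d}. w t j \<le> f t \<and> d - f (inv fr t) < j}"
  by (auto simp: F_ker_idx_def V_dom_def V_basis_def Let_def)

lemma VV_map_at_image:
  assumes "bij fr" "\<forall>t. w t permutes {1..d}" "\<forall>t. f t \<le> d"
    and a: "a1 \<in> basis_idx d" "a2 \<in> basis_idx d"
    and b: "V_basis d fr f w a1 = Some b1" "V_basis d fr f w a2 = Some b2"
  shows "VV_map p d fr f w x (b1, b2) = frob_inv p (x (a1, a2))"
proof -
  have "{(a1', a2'). a1' \<in> basis_idx d \<and> a2' \<in> basis_idx d \<and>
      V_basis d fr f w a1' = Some b1 \<and> V_basis d fr f w a2' = Some b2} = {(a1, a2)}"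
    using a b V_basis_inj[OF assms(1-3)] by blast
  then show ?thesis unfolding VV_map_def by simp
qed

lemma VV_map_eq_0:
  fixes x :: "('e::finite \<times> nat) \<times> ('e \<times> nat) \<Rightarrow> 'k::field"
  assumes "frob_inv p (0::'k) = 0"
    and "\<And>a1 a2. a1 \<in> V_dom d fr f w \<Longrightarrow> a2 \<in> V_dom d fr f w \<Longrightarrow> x (a1, a2) = 0"
  shows "VV_map p d fr f w x = (\<lambda>_. 0)"
proof -
  have "frob_inv p (x (a1, a2)) = 0"
    if "V_basis d fr f w a1 \<noteq> None" "V_basis d fr f w a2 \<noteq> None" for a1 a2
    using assms that unfolding V_dom_def by simp
  then show ?thesis unfolding VV_map_def by (auto intro!: sum.neutral)
qed

lemma ker_VV_map:
  fixes w :: "'e::finite \<Rightarrow> nat \<Rightarrow> nat"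
  assumes p: "0 < p" "surj (frob p :: 'k::field \<Rightarrow> 'k)"
    and V: "bij fr" "\<forall>t. w t permutes {1..d}" "\<forall>t. f t \<le> d"
    and S: "S \<subseteq> basis_idx d" "S' \<subseteq> basis_idx d"
  shows "{x \<in> (vanish_off (S \<times> S') :: (('e \<times> nat) \<times> ('e \<times> nat) \<Rightarrow> 'k) set). VV_map p d fr f w x = (\<lambda>_. 0)}
     = vanish_off (S \<times> S' - V_dom d fr f w \<times> V_dom d fr f w)"
proof (intro set_eqI iffI)
  fix x :: "('e \<times> nat) \<times> ('e \<times> nat) \<Rightarrow> 'k"
  assume x: "x \<in> vanish_off (S \<times> S' - V_dom d fr f w \<times> V_dom d fr f w)"
  have "x (a1, a2) = 0" if "a1 \<in> V_dom d fr f w" "a2 \<in> V_dom d fr f w" for a1 a2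
    using x that unfolding vanish_off_def by blast
  then have "VV_map p d fr f w x = (\<lambda>_. 0)"
    by (intro VV_map_eq_0) (simp_all add: frob_inv_eq_0_iff[OF p])
  then show "x \<in> {x \<in> vanish_off (S \<times> S'). VV_map p d fr f w x = (\<lambda>_. 0)}"
    using x by (auto simp: vanish_off_def)
next
  fix x :: "('e \<times> nat) \<times> ('e \<times> nat) \<Rightarrow> 'k"
  assume "x \<in> {x \<in> vanish_off (S \<times> S'). VV_map p d fr f w x = (\<lambda>_. 0)}"
  then have x: "x \<in> vanish_off (S \<times> S')" and VV0: "VV_map p d fr f w x = (\<lambda>_. 0)" by auto
  have "x (a1, a2) = 0"
    if a: "a1 \<in> S" "a2 \<in> S'" and D: "a1 \<in> V_dom d fr f w" "a2 \<in> V_dom d fr f w" for a1 a2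
  proof -
    obtain b1 b2 where b: "V_basis d fr f w a1 = Some b1" "V_basis d fr f w a2 = Some b2"
      using D unfolding V_dom_def by blast
    have "frob_inv p (x (a1, a2)) = 0"
      using VV_map_at_image[OF V _ _ b, of p x] VV0 a S by (metis subsetD)
    then show ?thesis using frob_inv_eq_0_iff[OF p] by simp
  qed
  with x show "x \<in> vanish_off (S \<times> S' - V_dom d fr f w \<times> V_dom d fr f w)"
    unfolding vanish_off_def by blast
qed

lemma r_V_eq:
  fixes w :: "'e::finite \<Rightarrow> nat \<Rightarrow> nat"
  assumes p: "0 < p" "surj (frob p :: 'k::field \<Rightarrow> 'k)"
    and V: "bij fr" "\<forall>t. w t permutes {1..d}" "\<forall>t. f t \<le> d"
  shows "r_V TYPE('k) p d fr f w t t' = f t * f t'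
    - card {j \<in> {1..d}. w t j \<le> f t \<and> d - f (inv fr t) < j}
      * card {j \<in> {1..d}. w t' j \<le> f t' \<and> d - f (inv fr t') < j}"
proof -
  let ?S = "F_ker_idx d f w t" and ?S' = "F_ker_idx d f w t'" and ?D = "V_dom d fr f w"
  have "r_V TYPE('k) p d fr f w t t'
      = vector_space.dim cscale (vanish_off (?S \<times> ?S' - ?D \<times> ?D) :: (_ \<Rightarrow> 'k) set)"
    unfolding r_V_def P_tensor_eq_vanish_off[where w = w, OF p(1) V(2)[rule_format] V(2)[rule_format]]
    by (simp only: ker_VV_map[OF p V F_ker_idx_subset_basis_idx F_ker_idx_subset_basis_idx])
  also have "\<dots> = card (?S \<times> ?S' - ?D \<times> ?D)"
    by (rule dim_vanish_off) (simp add: finite_F_ker_idx)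
  also have "\<dots> = card ?S * card ?S' - card (?S \<inter> ?D) * card (?S' \<inter> ?D)"
    by (rule card_Times_Diff_Times) (rule finite_F_ker_idx)+
  finally show ?thesis
    using V by (simp add: card_F_ker_idx F_ker_idx_Int_V_dom card_cartesian_product_singleton)
qed

section \<open>Comparison with \<open>r\<^sub>V\<^sup>o\<^sup>r\<^sup>d\<close>\<close>

lemma r_V_ord_complement:
  assumes "r \<le> d" "r' \<le> d"
  shows "int (r * (d - r)) - r_V_ord d r r' = int (min r r' * (d - max r r'))"
  using assms unfolding r_V_ord_def
  by (cases "r' \<le> r") (simp_all add: of_nat_diff algebra_simps max_def min_def)

lemma mult_diff_diff_eq_iff:
  fixes x y c :: nat
  assumes "c \<le> x" "c \<le> y"
  shows "(x - c) * (y - c) = x * y \<longleftrightarrow> c = 0"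
proof
  assume h: "(x - c) * (y - c) = x * y"
  show "c = 0"
  proof (rule ccontr)
    assume "c \<noteq> 0"
    then have "(x - c) * (y - c) \<le> (x - c) * y" "(x - c) * y < x * y"
      using assms by auto
    with h show False by linarith
  qed
qed simp

lemma cells_product_eq_iff:
  fixes a A B b r r' d :: nat
  assumes "a + A = r" "a + B = d - r'" "A + b = r'" "r' \<le> r" "r \<le> d"
  shows "A * B = r' * (d - r) \<longleftrightarrow> b = 0"
proof -
  have "A = r' - b" "B = (d - r) - b" using assms by arith+
  then have "A * B = (r' - b) * ((d - r) - b)" by (simp only:)
  then show ?thesis using mult_diff_diff_eq_iff[of b r' "d - r"] assms by auto
qed

lemma rank_defect_iff:
  fixes a A B b r r' d :: nat
  assumes cells: "a + A = r" "a + B = d - r'" "A + b = r'" and "r \<le> d" "r' \<le> d"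
  shows "int (r * (d - r) - A * B) = r_V_ord d r r' \<longleftrightarrow>
    ((r' \<le> r \<longrightarrow> a = r - r') \<and> (r \<le> r' \<longrightarrow> b = r' - r))"
proof -
  have "A * B \<le> r * (d - r)" using assms by (intro mult_le_mono) auto
  moreover have "r_V_ord d r r' = int (r * (d - r)) - int (min r r' * (d - max r r'))"
    using r_V_ord_complement[OF assms(4,5)] by simp
  ultimately have "int (r * (d - r) - A * B) = r_V_ord d r r' \<longleftrightarrow> A * B = min r r' * (d - max r r')"
    by (simp only: of_nat_diff) (metis diff_left_imp_eq of_nat_eq_iff)
  also have "\<dots> \<longleftrightarrow> ((r' \<le> r \<longrightarrow> a = r - r') \<and> (r \<le> r' \<longrightarrow> b = r' - r))"
  proof (cases "r' \<le> r")
    case True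
    then show ?thesis using cells_product_eq_iff[OF cells True assms(4)] cells by auto
  next
    case False
    have "b + A = r'" "b + B = d - r" "A + a = r" using assms by arith+
    from cells_product_eq_iff[OF this _ assms(5)] False cells show ?thesis
      by (auto simp: mult.commute)
  qed
  finally show ?thesis .
qed

theorem mainTheorem13:
  fixes p d :: nat
    and bar fr :: "'e::finite \<Rightarrow> 'e"
    and f :: "'e \<Rightarrow> nat"
    and w :: "'e \<Rightarrow> nat \<Rightarrow> nat"
    and \<tau> :: 'e
    and TYPE_k :: "'k::field itself"
  assumes p_prime: "prime p" and char_p: "of_nat p = (0::'k)"
    and alg_closed: "\<forall>q::'k poly. degree q > 0 \<longrightarrow> (\<exists>x. poly q x = 0)"
    and bar_inv: "\<forall>t. bar (bar t) = t" and bar_nofix: "\<forall>t. bar t \<noteq> t"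
    and fr_bij: "bij fr" and fr_bar: "\<forall>t. fr (bar t) = bar (fr t)"
    and sig: "\<forall>t. f t \<le> d \<and> f t + f (bar t) = d"
    and w_shuffle: "\<forall>t. w t \<in> shuffles (f t) d"
    and w_bar: "\<forall>t. w (bar t) = check_perm d (w t)"
  shows "int (r_V TYPE('k) p d fr f w \<tau> (bar \<tau>)) = r_V_ord d (f \<tau>) (f (inv fr \<tau>))
     \<longleftrightarrow>
       ((f (inv fr \<tau>) \<le> f \<tau> \<longrightarrow>
           card {j \<in> {1..d}. j \<le> d - f (inv fr \<tau>) \<and> w \<tau> j \<le> f \<tau>} = f \<tau> - f (inv fr \<tau>))
      \<and> (f \<tau> \<le> f (inv fr \<tau>) \<longrightarrow>
           card {j \<in> {1..d}. d - f (inv fr \<tau>) + 1 \<le> j \<and> f \<tau> + 1 \<le> w \<tau> j} = f (inv fr \<tau>) - f \<tau>))"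
proof -
  have p: "0 < p" using p_prime by (simp add: prime_gt_0_nat)
  have perm: "\<forall>t. w t permutes {1..d}" using w_shuffle by (simp add: shuffles_def)
  have fd: "\<forall>t. f t \<le> d" using sig by simp
  define r r' where "r = f \<tau>" and "r' = f (inv fr \<tau>)"
  have "inv fr (bar \<tau>) = bar (inv fr \<tau>)"
    using fr_bij fr_bar by (metis bij_inv_eq_iff)
  then have bar_\<tau>: "f (bar \<tau>) = d - r" "f (inv fr (bar \<tau>)) = d - r'" "w (bar \<tau>) = check_perm d (w \<tau>)"
    using sig w_bar unfolding r_def r'_def by (metis add_diff_cancel_left')+
  have "r_V TYPE('k) p d fr f w \<tau> (bar \<tau>) = r * (d - r)
      - card {j \<in> {1..d}. w \<tau> j \<le> r \<and> d - r' < j} * card {j \<in> {1..d}. j \<le> d - r' \<and> r < w \<tau> j}"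
    using r_V_eq[OF p surj_frob[OF p alg_closed] fr_bij perm fd, of \<tau> "bar \<tau>"] bar_\<tau> fd
      card_check_perm_cell[OF perm[rule_format] fd[rule_format] fd[rule_format], of \<tau> \<tau> "inv fr \<tau>"]
    by (simp add: r_def r'_def)
  moreover note cells = card_permutes_cells[OF perm[rule_format, of \<tau>], of r "d - r'"]
  moreover have "{j \<in> {1..d}. d - r' + 1 \<le> j \<and> r + 1 \<le> w \<tau> j} = {j \<in> {1..d}. d - r' < j \<and> r < w \<tau> j}"
    by auto
  ultimately show ?thesis
    using rank_defect_iff[OF cells(1,2)] fd unfolding r_def r'_def by simp
qed

end
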